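(* Let $\mathbb{T}$ be a time scale unbounded from above, $t_0\in\mathbb{T}$, and let $b,c$ be constants with $0\le b<c$. Let $x_0>0$, $y_0>0$, $z_0\ge0$, $N=x_0+y_0+z_0$. Then every solution $(x,y,z)$ of $$x^{\Delta}=-\frac{b\,x\,y^{\sigma}}{x+y},\qquad y^{\Delta}=\frac{b\,x\,y^{\sigma}}{x+y}-c\,y^{\sigma},\qquad z^{\Delta}=c\,y^{\sigma},$$ with $x,y:\mathbb{T}\to(0,\infty)$, $z:\mathbb{T}\to[0,\infty)$, $x(t_0)=x_0$, $y(t_0)=y_0$, $z(t_0)=z_0$, converges as $t\to\infty$ to $(\alpha,0,N-\alpha)$ for some $\alpha\in(0,N)$.
   Context: A time scale $\mathbb{T}$ is a nonempty closed subset of $\mathbb{R}$. $\sigma(t)=\inf\{s\in\mathbb{T}:s>t\}$, $f^{\sigma}=f\circ\sigma$. $f^{\Delta}$ is the delta (Hilger) derivative: for every $\varepsilon>0$ there is $\delta>0$ with $|f(\sigma(t))-f(s)-f^{\Delta}(t)(\sigma(t)-s)|\le\varepsilon|\sigma(t)-s|$ for $s\in(t-\delta,t+\delta)\cap\mathbb{T}$. *)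

theory Defs
  imports "HOL-Analysis.Analysis"
begin

definition time_scale :: "real set \<Rightarrow> bool" where
  "time_scale T \<longleftrightarrow> T \<noteq> {} \<and> closed T"

definition fwd_jump :: "real set \<Rightarrow> real \<Rightarrow> real" where
  "fwd_jump T t = (if {s\<in>T. s > t} = {} then t else Inf {s\<in>T. s > t})"

definition has_delta_derivative :: "real set \<Rightarrow> (real \<Rightarrow> real) \<Rightarrow> real \<Rightarrow> real \<Rightarrow> bool" where
  "has_delta_derivative T f D t \<longleftrightarrow>
     (\<forall>\<epsilon>>0. \<exists>\<delta>>0. \<forall>s\<in>T. \<bar>s - t\<bar> < \<delta> \<longrightarrow>
        \<bar>f (fwd_jump T t) - f s - D * (fwd_jump T t - s)\<bar> \<le> \<epsilon> * \<bar>fwd_jump T t - s\<bar>)"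

end

theory Submission
  imports Defs
begin

text \<open>The total x + y + z has delta derivative 0 and is constant, while x' \<le> 0 \<le> z'; so x and z
  are monotone and bounded, and all three components converge. The limit of y is 0, for otherwise
  z' = c y(\<sigma> t) would eventually stay above a positive constant and z would be unbounded.
  The limit of x is positive: if x tended to 0, a bound x \<le> q (x + y) on T makes x - \<mu> y
  nondecreasing for \<mu> = bq / (c - bq); as x - \<mu> y tends to 0 it stays \<le> 0, which improves the
  bound to x \<le> (b/c) q (x + y). Iterating gives x \<le> (b/c)^n (x + y) \<rightarrow> 0, contradicting x > 0.
  Monotonicity from the sign of a delta derivative rests on the induction principle for time
  scales.\<close>

lemma fwd_jump_ge: "t \<le> fwd_jump T t"
  unfolding fwd_jump_def by (auto intro: cInf_greatest)

lemma fwd_jump_in: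
  assumes "closed T" "t \<in> T"
  shows "fwd_jump T t \<in> T"
proof (cases "{s\<in>T. s > t} = {}")
  case False
  have "Inf {s\<in>T. s > t} \<in> closure {s\<in>T. s > t}"
    using False by (intro closure_contains_Inf) (auto intro: bdd_belowI[of _ t])
  also have "closure {s\<in>T. s > t} \<subseteq> T"
    using assms(1) by (intro closure_minimal) auto
  finally show ?thesis
    unfolding fwd_jump_def if_not_P[OF False] .
qed (use assms(2) in \<open>simp add: fwd_jump_def\<close>)

lemma fwd_jump_eqI:
  assumes "m \<in> T" "t < m" "\<And>r. r \<in> T \<Longrightarrow> t < r \<Longrightarrow> m \<le> r"
  shows "fwd_jump T t = m"
  using assms unfolding fwd_jump_def by (auto intro!: cInf_eq_minimum)

lemma fwd_jump_right_dense:
  assumes "t \<in> closure {s\<in>T. s > t}"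
  shows "fwd_jump T t = t"
proof -
  let ?S = "{s\<in>T. s > t}"
  have ne: "?S \<noteq> {}"
    using assms by (metis closure_empty empty_iff)
  have "closure ?S \<subseteq> {Inf ?S..}"
    using ne by (intro closure_minimal) (auto intro!: cInf_lower bdd_belowI[of _ t])
  with assms have "Inf ?S \<le> t"
    by auto
  moreover have "t \<le> Inf ?S"
    using ne by (auto intro: cInf_greatest)
  ultimately show ?thesis
    using ne unfolding fwd_jump_def by simp
qed

lemma fwd_jump_left_scattered:
  assumes "closed T" "s \<in> T" "m \<in> T" "s < m" "m \<notin> closure (T \<inter> {..<m})"
  obtains p where "p \<in> T" "s \<le> p" "p < m" "fwd_jump T p = m"
proof -
  let ?C = "T \<inter> {s..<m}"
  have bdd: "bdd_above ?C"
    by auto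
  have "Sup ?C \<in> closure ?C"
    using assms(2,4) bdd by (intro closure_contains_Sup) auto
  moreover have "closure ?C \<subseteq> T \<inter> {s..m}"
    using assms(1) by (intro closure_minimal) auto
  moreover have "closure ?C \<subseteq> closure (T \<inter> {..<m})"
    by (intro closure_mono) auto
  ultimately have p: "Sup ?C \<in> T" "s \<le> Sup ?C" "Sup ?C < m"
    using assms(5) by (auto simp: less_le)
  have "fwd_jump T (Sup ?C) = m"
  proof (rule fwd_jump_eqI[OF assms(3) p(3)])
    fix r assume "r \<in> T" "Sup ?C < r"
    then show "m \<le> r"
      using p(2) cSup_upper[OF _ bdd, of r] by force
  qed
  with p show thesis
    using that by blast
qed

lemma time_scale_induct [consumes 4, case_names base right_scattered right_dense left_dense]:
  assumes "closed T" "s \<in> T" "t \<in> T" "s \<le> t"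
    and base: "P s"
    and right_scattered: "\<And>u. u \<in> T \<Longrightarrow> s \<le> u \<Longrightarrow> u < fwd_jump T u \<Longrightarrow> P u \<Longrightarrow> P (fwd_jump T u)"
    and right_dense: "\<And>u. u \<in> T \<Longrightarrow> s \<le> u \<Longrightarrow> fwd_jump T u = u \<Longrightarrow> P u \<Longrightarrow>
                        \<exists>\<delta>>0. \<forall>r\<in>T. u < r \<and> r < u + \<delta> \<longrightarrow> P r"
    and left_dense: "\<And>u. u \<in> T \<Longrightarrow> s < u \<Longrightarrow> u \<in> closure (T \<inter> {..<u}) \<Longrightarrow>
                       (\<And>r. r \<in> T \<Longrightarrow> s \<le> r \<Longrightarrow> r < u \<Longrightarrow> P r) \<Longrightarrow> P u"
  shows "P t"
proof (rule ccontr)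
  assume "\<not> P t"
  define B where "B = {u\<in>T. s \<le> u \<and> \<not> P u}"
  define m where "m = Inf B"
  have "t \<in> B"
    using assms(3,4) \<open>\<not> P t\<close> by (simp add: B_def)
  have bdd: "bdd_below B"
    by (auto simp: B_def intro: bdd_belowI[of _ s])
  have m_le: "m \<le> u" if "u \<in> B" for u
    unfolding m_def using that bdd by (rule cInf_lower)
  have "m \<in> closure B"
    unfolding m_def using \<open>t \<in> B\<close> bdd by (intro closure_contains_Inf) auto
  also have "closure B \<subseteq> T \<inter> {s..}"
    using assms(1) by (intro closure_minimal) (auto simp: B_def)
  finally have m: "m \<in> T" "s \<le> m"
    by auto
  have below_m: "P r" if "r \<in> T" "s \<le> r" "r < m" for r
    using m_le[of r] that by (force simp: B_def)
  show False
  proof (cases "P m")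
    case True
    then have "B \<subseteq> {r\<in>T. r > m}"
      using m_le by (force simp: B_def less_le)
    then have "fwd_jump T m = m"
      using \<open>m \<in> closure B\<close> closure_mono by (blast intro: fwd_jump_right_dense)
    then obtain \<delta> where "\<delta> > 0" and \<delta>: "\<forall>r\<in>T. m < r \<and> r < m + \<delta> \<longrightarrow> P r"
      using right_dense m True by blast
    moreover obtain r where "r \<in> B" "r < m + \<delta>"
      using cInf_less_iff[of B "m + \<delta>"] \<open>t \<in> B\<close> bdd \<open>\<delta> > 0\<close> unfolding m_def by auto
    ultimately show False
      using m_le[of r] True by (force simp: B_def less_le)
  next
    case False
    with base m have "s < m"
      by (cases "s = m") auto
    show False
    proof (cases "m \<in> closure (T \<inter> {..<m})")
      case True
      then show False
        using left_dense[OF m(1) \<open>s < m\<close>] below_m \<open>\<not> P m\<close> by blast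
    next
      case False
      then obtain p where "p \<in> T" "s \<le> p" "p < m" "fwd_jump T p = m"
        using fwd_jump_left_scattered[OF assms(1,2) m(1) \<open>s < m\<close>] by blast
      then show False
        using right_scattered[of p] below_m[of p] \<open>\<not> P m\<close> by auto
    qed
  qed
qed

lemma has_delta_derivative_jump:
  assumes "has_delta_derivative T f D t" "t \<in> T"
  shows "f (fwd_jump T t) - f t = D * (fwd_jump T t - t)"
proof -
  define e where "e = \<bar>f (fwd_jump T t) - f t - D * (fwd_jump T t - t)\<bar>"
  define d where "d = \<bar>fwd_jump T t - t\<bar>"
  have e_le: "e \<le> \<epsilon> * d" if "\<epsilon> > 0" for \<epsilon>
    using assms that unfolding has_delta_derivative_def e_def d_def by fastforce
  have "e = 0"
  proof (rule ccontr)
    assume "e \<noteq> 0"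
    then have "e > 0"
      by (simp add: e_def)
    then have "e \<le> e / (d + 1) * d"
      by (intro e_le) (simp add: d_def add_nonneg_pos)
    also have "\<dots> < e"
      using \<open>e > 0\<close> by (simp add: d_def field_simps)
    finally show False
      by simp
  qed
  then show ?thesis
    by (simp add: e_def)
qed

lemma has_delta_derivative_imp_continuous:
  assumes "has_delta_derivative T f D t" "t \<in> T"
  shows "continuous (at t within T) f"
proof -
  define \<sigma> where "\<sigma> = fwd_jump T t"
  define R where "R s = f \<sigma> - f s - D * (\<sigma> - s)" for s
  have "(R \<longlongrightarrow> 0) (at t within T)"
  proof (rule tendstoI)
    fix \<eta> :: real
    assume "\<eta> > 0"
    define d where "d = \<bar>\<sigma> - t\<bar> + 1"
    have "d > 0"
      by (simp add: d_def add_nonneg_pos)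
    with \<open>\<eta> > 0\<close> obtain \<delta> where "\<delta> > 0"
      and \<delta>: "\<And>s. s \<in> T \<Longrightarrow> \<bar>s - t\<bar> < \<delta> \<Longrightarrow> \<bar>R s\<bar> \<le> \<eta> / d * \<bar>\<sigma> - s\<bar>"
      using assms(1) unfolding has_delta_derivative_def R_def \<sigma>_def by (meson divide_pos_pos)
    have "\<bar>R s\<bar> < \<eta>" if "s \<in> T" "\<bar>s - t\<bar> < min \<delta> 1" for s
    proof -
      have "\<bar>\<sigma> - s\<bar> < d"
        using that(2) unfolding d_def by linarith
      then have "\<eta> / d * \<bar>\<sigma> - s\<bar> < \<eta> / d * d"
        using \<open>\<eta> > 0\<close> \<open>d > 0\<close> by (intro mult_strict_left_mono) simp_all
      with \<delta>[OF that(1)] that(2) \<open>d > 0\<close> show ?thesis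
        by simp
    qed
    then show "eventually (\<lambda>s. dist (R s) 0 < \<eta>) (at t within T)"
      unfolding eventually_at dist_real_def using \<open>\<delta> > 0\<close>
      by (intro exI[of _ "min \<delta> 1"]) auto
  qed
  then have "((\<lambda>s. f \<sigma> - D * (\<sigma> - s) - R s) \<longlongrightarrow> f \<sigma> - D * (\<sigma> - t) - 0) (at t within T)"
    by (intro tendsto_intros)
  moreover have "f \<sigma> - D * (\<sigma> - t) = f t"
    using has_delta_derivative_jump[OF assms] by (simp add: \<sigma>_def)
  ultimately show ?thesis
    unfolding continuous_within by (simp add: R_def)
qed

lemma has_delta_derivative_add:
  assumes "has_delta_derivative T f D t" "has_delta_derivative T g E t"
  shows "has_delta_derivative T (\<lambda>u. f u + g u) (D + E) t"
  unfolding has_delta_derivative_def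
proof (intro allI impI)
  fix \<epsilon> :: real
  assume "\<epsilon> > 0"
  define \<sigma> where "\<sigma> = fwd_jump T t"
  obtain \<delta>\<^sub>1 where "\<delta>\<^sub>1 > 0"
    and f: "\<And>s. s \<in> T \<Longrightarrow> \<bar>s - t\<bar> < \<delta>\<^sub>1 \<Longrightarrow> \<bar>f \<sigma> - f s - D * (\<sigma> - s)\<bar> \<le> \<epsilon> / 2 * \<bar>\<sigma> - s\<bar>"
    using assms(1) \<open>\<epsilon> > 0\<close> unfolding has_delta_derivative_def \<sigma>_def
    by (metis half_gt_zero)
  obtain \<delta>\<^sub>2 where "\<delta>\<^sub>2 > 0"
    and g: "\<And>s. s \<in> T \<Longrightarrow> \<bar>s - t\<bar> < \<delta>\<^sub>2 \<Longrightarrow> \<bar>g \<sigma> - g s - E * (\<sigma> - s)\<bar> \<le> \<epsilon> / 2 * \<bar>\<sigma> - s\<bar>"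
    using assms(2) \<open>\<epsilon> > 0\<close> unfolding has_delta_derivative_def \<sigma>_def
    by (metis half_gt_zero)
  show "\<exists>\<delta>>0. \<forall>s\<in>T. \<bar>s - t\<bar> < \<delta> \<longrightarrow>
          \<bar>f (fwd_jump T t) + g (fwd_jump T t) - (f s + g s) - (D + E) * (fwd_jump T t - s)\<bar>
            \<le> \<epsilon> * \<bar>fwd_jump T t - s\<bar>"
  proof (intro exI[of _ "min \<delta>\<^sub>1 \<delta>\<^sub>2"] conjI ballI impI)
    fix s
    assume "s \<in> T" "\<bar>s - t\<bar> < min \<delta>\<^sub>1 \<delta>\<^sub>2"
    then show "\<bar>f (fwd_jump T t) + g (fwd_jump T t) - (f s + g s) - (D + E) * (fwd_jump T t - s)\<bar>
                 \<le> \<epsilon> * \<bar>fwd_jump T t - s\<bar>"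
      using f[of s] g[of s] unfolding \<sigma>_def by (simp add: algebra_simps abs_if split: if_splits)
  qed (use \<open>\<delta>\<^sub>1 > 0\<close> \<open>\<delta>\<^sub>2 > 0\<close> in simp)
qed

lemma has_delta_derivative_cmult:
  assumes "has_delta_derivative T f D t"
  shows "has_delta_derivative T (\<lambda>u. a * f u) (a * D) t"
  unfolding has_delta_derivative_def
proof (intro allI impI)
  fix \<epsilon> :: real
  assume "\<epsilon> > 0"
  define \<sigma> where "\<sigma> = fwd_jump T t"
  have "\<epsilon> / (\<bar>a\<bar> + 1) > 0"
    using \<open>\<epsilon> > 0\<close> by (simp add: add_nonneg_pos)
  then obtain \<delta> where "\<delta> > 0" and f: "\<And>s. s \<in> T \<Longrightarrow> \<bar>s - t\<bar> < \<delta> \<Longrightarrow>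
      \<bar>f \<sigma> - f s - D * (\<sigma> - s)\<bar> \<le> \<epsilon> / (\<bar>a\<bar> + 1) * \<bar>\<sigma> - s\<bar>"
    using assms unfolding has_delta_derivative_def \<sigma>_def by blast
  show "\<exists>\<delta>>0. \<forall>s\<in>T. \<bar>s - t\<bar> < \<delta> \<longrightarrow>
          \<bar>a * f (fwd_jump T t) - a * f s - a * D * (fwd_jump T t - s)\<bar> \<le> \<epsilon> * \<bar>fwd_jump T t - s\<bar>"
  proof (intro exI[of _ \<delta>] conjI ballI impI)
    fix s
    assume "s \<in> T" "\<bar>s - t\<bar> < \<delta>"
    have "\<bar>a * f \<sigma> - a * f s - a * D * (\<sigma> - s)\<bar> = \<bar>a\<bar> * \<bar>f \<sigma> - f s - D * (\<sigma> - s)\<bar>"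
      by (simp flip: abs_mult add: algebra_simps)
    also have "\<dots> \<le> (\<bar>a\<bar> + 1) * (\<epsilon> / (\<bar>a\<bar> + 1) * \<bar>\<sigma> - s\<bar>)"
      using f[OF \<open>s \<in> T\<close> \<open>\<bar>s - t\<bar> < \<delta>\<close>] by (intro mult_mono) auto
    also have "\<dots> = \<epsilon> * \<bar>\<sigma> - s\<bar>"
      by (simp add: add_nonneg_pos)
    finally show "\<bar>a * f (fwd_jump T t) - a * f s - a * D * (fwd_jump T t - s)\<bar> \<le> \<epsilon> * \<bar>fwd_jump T t - s\<bar>"
      unfolding \<sigma>_def .
  qed (rule \<open>\<delta> > 0\<close>)
qed

lemma has_delta_derivative_right_dense_ge:
  assumes "has_delta_derivative T f D u" "fwd_jump T u = u" "\<epsilon> > 0"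
  obtains \<delta> where "\<delta> > 0" "\<And>r. r \<in> T \<Longrightarrow> u < r \<Longrightarrow> r < u + \<delta> \<Longrightarrow> (D - \<epsilon>) * (r - u) \<le> f r - f u"
proof -
  obtain \<delta> where "\<delta> > 0"
    and \<delta>: "\<And>r. r \<in> T \<Longrightarrow> \<bar>r - u\<bar> < \<delta> \<Longrightarrow> \<bar>f u - f r - D * (u - r)\<bar> \<le> \<epsilon> * \<bar>u - r\<bar>"
    using assms unfolding has_delta_derivative_def by force
  have "(D - \<epsilon>) * (r - u) \<le> f r - f u" if "r \<in> T" "u < r" "r < u + \<delta>" for r
    using \<delta>[of r] that by (auto simp: abs_if algebra_simps split: if_splits)
  with \<open>\<delta> > 0\<close> show thesis
    using that by blast
qed

lemma continuous_within_left_dense_ge: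
  fixes g :: "real \<Rightarrow> real"
  assumes "continuous (at u within T) g" "u \<in> closure (T \<inter> {..<u})" "s < u"
    and "\<And>r. r \<in> T \<Longrightarrow> s \<le> r \<Longrightarrow> r < u \<Longrightarrow> a \<le> g r"
  shows "a \<le> g u"
proof (rule tendsto_lowerbound)
  show "(g \<longlongrightarrow> g u) (at u within (T \<inter> {..<u}))"
    using assms(1) unfolding continuous_within by (rule tendsto_within_subset) auto
  show "eventually (\<lambda>r. a \<le> g r) (at u within (T \<inter> {..<u}))"
    unfolding eventually_at using assms(3,4) by (intro exI[of _ "u - s"]) (auto simp: dist_real_def)
  show "at u within (T \<inter> {..<u}) \<noteq> bot"
    using assms(2) by (simp add: trivial_limit_within closure_def)
qed

text \<open>The slack \<epsilon> is needed at right-dense points, where the derivative controls f only up to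
  o(r - u).\<close>
lemma has_delta_derivative_lower_bound_approx:
  assumes "closed T" "s \<in> T" "t \<in> T" "s \<le> t" "\<epsilon> > 0"
    and deriv: "\<And>\<tau>. \<tau> \<in> T \<Longrightarrow> s \<le> \<tau> \<Longrightarrow> \<tau> \<le> t \<Longrightarrow> has_delta_derivative T f (D \<tau>) \<tau>"
    and bound: "\<And>\<tau>. \<tau> \<in> T \<Longrightarrow> s \<le> \<tau> \<Longrightarrow> \<tau> \<le> t \<Longrightarrow> k \<le> D \<tau>"
  shows "(k - \<epsilon>) * (t - s) \<le> f t - f s"
proof -
  have "u \<le> t \<longrightarrow> (k - \<epsilon>) * (u - s) \<le> f u - f s" if "u \<in> T" "s \<le> u" for u
    using assms(1,2) that
  proof (induct u rule: time_scale_induct)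
    case base
    then show ?case
      by simp
  next
    case (right_scattered u)
    show ?case
    proof
      assume "fwd_jump T u \<le> t"
      then have "f (fwd_jump T u) - f u = D u * (fwd_jump T u - u)"
        using right_scattered by (intro has_delta_derivative_jump deriv) auto
      moreover have "(k - \<epsilon>) * (fwd_jump T u - u) \<le> D u * (fwd_jump T u - u)"
        using right_scattered \<open>fwd_jump T u \<le> t\<close> \<open>\<epsilon> > 0\<close> bound[of u]
        by (intro mult_right_mono) auto
      ultimately show "(k - \<epsilon>) * (fwd_jump T u - s) \<le> f (fwd_jump T u) - f s"
        using right_scattered \<open>fwd_jump T u \<le> t\<close> by (simp add: algebra_simps)
    qed
  next
    case (right_dense u)
    show ?case
    proof (cases "u < t")
      case True
      then obtain \<delta> where "\<delta> > 0"
        and \<delta>: "\<And>r. r \<in> T \<Longrightarrow> u < r \<Longrightarrow> r < u + \<delta> \<Longrightarrow> (D u - \<epsilon>) * (r - u) \<le> f r - f u"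
        using has_delta_derivative_right_dense_ge[OF deriv right_dense(3) \<open>\<epsilon> > 0\<close>] right_dense(1,2)
        by auto
      have "(k - \<epsilon>) * (r - s) \<le> f r - f s" if "r \<in> T" "u < r" "r < u + \<delta>" "r \<le> t" for r
      proof -
        have "(k - \<epsilon>) * (r - u) \<le> (D u - \<epsilon>) * (r - u)"
          using bound[of u] right_dense True that by (intro mult_right_mono) auto
        then show ?thesis
          using \<delta>[OF that(1-3)] right_dense True by (simp add: algebra_simps)
      qed
      then show ?thesis
        using \<open>\<delta> > 0\<close> by blast
    qed (auto intro: exI[of _ 1])
  next
    case (left_dense u)
    show ?case
    proof
      assume "u \<le> t"
      have "continuous (at u within T) (\<lambda>r. f r - f s - (k - \<epsilon>) * (r - s))"
        using left_dense \<open>u \<le> t\<close>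
        by (intro continuous_intros has_delta_derivative_imp_continuous[OF deriv]) auto
      then have "0 \<le> f u - f s - (k - \<epsilon>) * (u - s)"
        by (rule continuous_within_left_dense_ge[OF _ left_dense(3,2)])
          (use left_dense(4) \<open>u \<le> t\<close> in auto)
      then show "(k - \<epsilon>) * (u - s) \<le> f u - f s"
        by simp
    qed
  qed
  then show ?thesis
    using assms(3,4) by blast
qed

lemma has_delta_derivative_lower_bound:
  assumes "closed T" "s \<in> T" "t \<in> T" "s \<le> t"
    and deriv: "\<And>\<tau>. \<tau> \<in> T \<Longrightarrow> s \<le> \<tau> \<Longrightarrow> \<tau> \<le> t \<Longrightarrow> has_delta_derivative T f (D \<tau>) \<tau>"
    and bound: "\<And>\<tau>. \<tau> \<in> T \<Longrightarrow> s \<le> \<tau> \<Longrightarrow> \<tau> \<le> t \<Longrightarrow> k \<le> D \<tau>"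
  shows "k * (t - s) \<le> f t - f s"
proof (cases "s = t")
  case False
  with assms(4) have "t - s > 0"
    by simp
  show ?thesis
  proof (rule field_le_epsilon)
    fix e :: real
    assume "e > 0"
    with \<open>t - s > 0\<close> have "(k - e / (t - s)) * (t - s) \<le> f t - f s"
      by (intro has_delta_derivative_lower_bound_approx[OF assms(1-4) _ deriv bound]) simp_all
    moreover have "(k - e / (t - s)) * (t - s) = k * (t - s) - e"
      using \<open>t - s > 0\<close> by (simp add: left_diff_distrib)
    ultimately show "k * (t - s) \<le> f t - f s + e"
      by simp
  qed
qed simp

lemma has_delta_derivative_nonneg_imp_le:
  assumes "closed T" "s \<in> T" "t \<in> T" "s \<le> t"
    and "\<And>\<tau>. \<tau> \<in> T \<Longrightarrow> s \<le> \<tau> \<Longrightarrow> \<tau> \<le> t \<Longrightarrow> has_delta_derivative T f (D \<tau>) \<tau>"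
    and "\<And>\<tau>. \<tau> \<in> T \<Longrightarrow> s \<le> \<tau> \<Longrightarrow> \<tau> \<le> t \<Longrightarrow> 0 \<le> D \<tau>"
  shows "f s \<le> f t"
  using has_delta_derivative_lower_bound[of T s t f D 0] assms by simp

lemma has_delta_derivative_zero_imp_eq:
  assumes "closed T" "s \<in> T" "t \<in> T"
    and deriv: "\<And>\<tau>. \<tau> \<in> T \<Longrightarrow> has_delta_derivative T f 0 \<tau>"
  shows "f s = f t"
proof -
  have le: "f s \<le> f t \<and> - f s \<le> - f t" if "s \<in> T" "t \<in> T" "s \<le> t" for s t
  proof
    show "f s \<le> f t"
      using has_delta_derivative_nonneg_imp_le[OF assms(1) that deriv] by simp
    have "has_delta_derivative T (\<lambda>u. - f u) 0 \<tau>" if "\<tau> \<in> T" for \<tau>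
      using has_delta_derivative_cmult[OF deriv[OF that], of "-1"] by simp
    then show "- f s \<le> - f t"
      using has_delta_derivative_nonneg_imp_le[OF assms(1) that, of "\<lambda>u. - f u" "\<lambda>_. 0"] by simp
  qed
  consider "s \<le> t" | "t \<le> s"
    by linarith
  then show ?thesis
    using le[OF assms(2,3)] le[OF assms(3,2)] by cases auto
qed

lemma eventually_at_top_principal_ge:
  fixes T :: "'a::linorder set"
  shows "eventually (\<lambda>u. u \<in> T \<and> t \<le> u) (inf at_top (principal T))"
  unfolding eventually_inf_principal by (rule eventually_mono[OF eventually_ge_at_top[of t]]) simp

lemma at_top_principal_neq_bot:
  fixes T :: "'a::linorder set"
  assumes "\<forall>r. \<exists>t\<in>T. t > r"
  shows "inf at_top (principal T) \<noteq> bot"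
proof
  assume "inf at_top (principal T) = bot"
  then have "eventually (\<lambda>_. False) (inf at_top (principal T))"
    by simp
  then have "eventually (\<lambda>u. u \<in> T \<longrightarrow> False) at_top"
    unfolding eventually_inf_principal .
  then obtain M where "\<And>u. M \<le> u \<Longrightarrow> u \<notin> T"
    unfolding eventually_at_top_linorder by auto
  then show False
    using assms less_imp_le by blast
qed

lemma mono_on_tendsto_Sup:
  fixes f :: "'a::linorder \<Rightarrow> 'b::{conditionally_complete_linorder, linorder_topology}"
  assumes "mono_on T f" "bdd_above (f ` T)" "T \<noteq> {}"
  shows "(f \<longlongrightarrow> Sup (f ` T)) (inf at_top (principal T))"
proof (rule order_tendstoI)
  fix a
  assume "a < Sup (f ` T)"
  then obtain t where "t \<in> T" "a < f t"
    using assms(2,3) by (auto simp: less_cSup_iff)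
  from eventually_at_top_principal_ge[of T t]
  show "eventually (\<lambda>u. a < f u) (inf at_top (principal T))"
    by eventually_elim (use \<open>a < f t\<close> mono_onD[OF assms(1) \<open>t \<in> T\<close>] in force)
next
  fix a
  assume "Sup (f ` T) < a"
  then show "eventually (\<lambda>u. f u < a) (inf at_top (principal T))"
    unfolding eventually_inf_principal using assms(2)
    by (intro always_eventually) (auto intro: le_less_trans[OF cSup_upper])
qed

lemma tendsto_at_top_principal_lowerbound:
  fixes f :: "'a::linorder \<Rightarrow> real"
  assumes "(f \<longlongrightarrow> l) (inf at_top (principal T))" "\<forall>r. \<exists>t\<in>T. t > r"
    and "\<And>t. t \<in> T \<Longrightarrow> a \<le> f t"
  shows "a \<le> l"
  using assms(1) _ at_top_principal_neq_bot[OF assms(2)]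
  by (rule tendsto_lowerbound) (simp add: eventually_inf_principal assms(3))

locale sir_time_scale =
  fixes T :: "real set" and b c :: real and x y z x' y' z' :: "real \<Rightarrow> real"
  assumes closed: "closed T"
    and unbounded: "\<forall>r. \<exists>t\<in>T. t > r"
    and b_nonneg: "0 \<le> b" and b_less_c: "b < c"
    and x_pos: "\<And>t. t \<in> T \<Longrightarrow> 0 < x t"
    and y_pos: "\<And>t. t \<in> T \<Longrightarrow> 0 < y t"
    and z_nonneg: "\<And>t. t \<in> T \<Longrightarrow> 0 \<le> z t"
    and x_deriv: "\<And>t. t \<in> T \<Longrightarrow> has_delta_derivative T x (x' t) t"
    and y_deriv: "\<And>t. t \<in> T \<Longrightarrow> has_delta_derivative T y (y' t) t"
    and z_deriv: "\<And>t. t \<in> T \<Longrightarrow> has_delta_derivative T z (z' t) t"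
    and x'_eq: "\<And>t. t \<in> T \<Longrightarrow> x' t = - (b * x t * y (fwd_jump T t) / (x t + y t))"
    and y'_eq: "\<And>t. t \<in> T \<Longrightarrow> y' t = b * x t * y (fwd_jump T t) / (x t + y t) - c * y (fwd_jump T t)"
    and z'_eq: "\<And>t. t \<in> T \<Longrightarrow> z' t = c * y (fwd_jump T t)"
begin

lemma T_nonempty: "T \<noteq> {}"
  using unbounded by blast

lemma c_pos: "0 < c"
  using b_nonneg b_less_c by linarith

lemma y_fwd_jump_pos: "t \<in> T \<Longrightarrow> 0 < y (fwd_jump T t)"
  by (intro y_pos fwd_jump_in closed)

lemma x_antimono:
  assumes "s \<in> T" "t \<in> T" "s \<le> t"
  shows "x t \<le> x s"
proof -
  have "has_delta_derivative T (\<lambda>u. - x u) (- x' \<tau>) \<tau>" if "\<tau> \<in> T" for \<tau>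
    using has_delta_derivative_cmult[OF x_deriv[OF that], of "-1"] by simp
  moreover have "0 \<le> - x' \<tau>" if "\<tau> \<in> T" for \<tau>
    using b_nonneg x_pos[OF that] y_pos[OF that] y_fwd_jump_pos[OF that]
    by (simp add: x'_eq that divide_nonneg_pos)
  ultimately have "- x s \<le> - x t"
    using assms by (intro has_delta_derivative_nonneg_imp_le[OF closed, of s t "\<lambda>u. - x u"]) auto
  then show ?thesis
    by simp
qed

lemma z_mono:
  assumes "s \<in> T" "t \<in> T" "s \<le> t"
  shows "z s \<le> z t"
proof -
  have "0 \<le> z' \<tau>" if "\<tau> \<in> T" for \<tau>
    using c_pos y_fwd_jump_pos[OF that] by (simp add: z'_eq that)
  then show ?thesis
    using assms by (intro has_delta_derivative_nonneg_imp_le[OF closed _ _ _ z_deriv]) auto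
qed

lemma total_eq:
  assumes "s \<in> T" "t \<in> T"
  shows "x s + y s + z s = x t + y t + z t"
proof (rule has_delta_derivative_zero_imp_eq[OF closed assms, of "\<lambda>u. x u + y u + z u"])
  fix \<tau>
  assume "\<tau> \<in> T"
  then have "has_delta_derivative T (\<lambda>u. x u + y u + z u) (x' \<tau> + y' \<tau> + z' \<tau>) \<tau>"
    by (intro has_delta_derivative_add x_deriv y_deriv z_deriv)
  moreover have "x' \<tau> + y' \<tau> + z' \<tau> = 0"
    using \<open>\<tau> \<in> T\<close> by (simp add: x'_eq y'_eq z'_eq)
  ultimately show "has_delta_derivative T (\<lambda>u. x u + y u + z u) 0 \<tau>"
    by simp
qed

lemma z_less_total: "s \<in> T \<Longrightarrow> t \<in> T \<Longrightarrow> z t < x s + y s + z s"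
  using total_eq[of s t] x_pos[of t] y_pos[of t] by simp

lemma x_converges:
  obtains \<alpha> where "(x \<longlongrightarrow> \<alpha>) (inf at_top (principal T))"
proof -
  have "mono_on T (\<lambda>t. - x t)"
    by (intro mono_onI) (simp add: x_antimono)
  moreover have "bdd_above ((\<lambda>t. - x t) ` T)"
    using x_pos by (auto intro!: bdd_aboveI[of _ 0] less_imp_le)
  ultimately have "((\<lambda>t. - (- x t)) \<longlongrightarrow> - Sup ((\<lambda>t. - x t) ` T)) (inf at_top (principal T))"
    by (intro tendsto_minus mono_on_tendsto_Sup T_nonempty)
  then show thesis
    using that by simp
qed

lemma z_converges:
  obtains \<zeta> where "(z \<longlongrightarrow> \<zeta>) (inf at_top (principal T))"
proof -
  obtain t0 where "t0 \<in> T"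
    using T_nonempty by blast
  have "mono_on T z"
    by (intro mono_onI) (simp add: z_mono)
  moreover have "bdd_above (z ` T)"
    using z_less_total[OF \<open>t0 \<in> T\<close>] by (auto intro!: bdd_aboveI less_imp_le)
  ultimately show thesis
    using that mono_on_tendsto_Sup T_nonempty by blast
qed

lemma y_converges:
  obtains L where "(y \<longlongrightarrow> L) (inf at_top (principal T))"
proof -
  obtain \<alpha> \<zeta> where x: "(x \<longlongrightarrow> \<alpha>) (inf at_top (principal T))"
    and z: "(z \<longlongrightarrow> \<zeta>) (inf at_top (principal T))"
    using x_converges z_converges by metis
  obtain t0 where "t0 \<in> T"
    using T_nonempty by blast
  let ?N = "x t0 + y t0 + z t0"
  have "((\<lambda>t. ?N - x t - z t) \<longlongrightarrow> ?N - \<alpha> - \<zeta>) (inf at_top (principal T))"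
    by (intro tendsto_intros x z)
  moreover have "eventually (\<lambda>t. ?N - x t - z t = y t) (inf at_top (principal T))"
    unfolding eventually_inf_principal using total_eq[OF \<open>t0 \<in> T\<close>] by simp
  ultimately show thesis
    using that tendsto_cong by force
qed

lemma y_limit_eq_zero:
  assumes y: "(y \<longlongrightarrow> L) (inf at_top (principal T))"
  shows "L = 0"
proof (rule ccontr)
  have "0 \<le> L"
    using y unbounded by (rule tendsto_at_top_principal_lowerbound) (simp add: y_pos less_imp_le)
  moreover assume "L \<noteq> 0"
  ultimately have "0 < L"
    by simp
  then have "eventually (\<lambda>t. t \<in> T \<longrightarrow> L / 2 < y t) at_top"
    using order_tendstoD(1)[OF y, of "L / 2"] by (simp add: eventually_inf_principal)
  then obtain t1 where t1: "\<And>t. t1 \<le> t \<Longrightarrow> t \<in> T \<Longrightarrow> L / 2 < y t"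
    by (auto simp: eventually_at_top_linorder)
  obtain s where "s \<in> T" "s \<ge> t1"
    using unbounded less_imp_le by blast
  define k where "k = c * L / 2"
  have "k > 0"
    using c_pos \<open>0 < L\<close> by (simp add: k_def)
  define N where "N = x s + y s + z s"
  have "0 < N / k"
    using x_pos[OF \<open>s \<in> T\<close>] y_pos[OF \<open>s \<in> T\<close>] z_nonneg[OF \<open>s \<in> T\<close>] \<open>k > 0\<close>
    by (simp add: N_def)
  obtain t where "t \<in> T" "t > s + N / k"
    using unbounded by blast
  have "k * (t - s) \<le> z t - z s"
  proof (rule has_delta_derivative_lower_bound[OF closed \<open>s \<in> T\<close> \<open>t \<in> T\<close> _ z_deriv])
    show "s \<le> t"
      using \<open>t > s + N / k\<close> \<open>0 < N / k\<close> by simp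
    fix \<tau>
    assume "\<tau> \<in> T" "s \<le> \<tau>"
    then have "L / 2 < y (fwd_jump T \<tau>)"
      using t1 fwd_jump_ge[of \<tau> T] fwd_jump_in[OF closed \<open>\<tau> \<in> T\<close>] \<open>s \<ge> t1\<close> by simp
    then show "k \<le> z' \<tau>"
      using \<open>\<tau> \<in> T\<close> c_pos by (simp add: k_def z'_eq)
  qed
  moreover have "N < k * (t - s)"
    using \<open>t > s + N / k\<close> \<open>k > 0\<close> by (simp add: field_simps)
  ultimately show False
    using z_less_total[OF \<open>s \<in> T\<close> \<open>t \<in> T\<close>] z_nonneg[OF \<open>s \<in> T\<close>] by (simp add: N_def)
qed

lemma y_tendsto_zero: "(y \<longlongrightarrow> 0) (inf at_top (principal T))"
  using y_converges y_limit_eq_zero by metis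

lemma x_limit_le:
  assumes "(x \<longlongrightarrow> \<alpha>) (inf at_top (principal T))" "t \<in> T"
  shows "\<alpha> \<le> x t"
proof (rule tendsto_upperbound[OF assms(1) _ at_top_principal_neq_bot[OF unbounded]])
  show "eventually (\<lambda>u. x u \<le> x t) (inf at_top (principal T))"
    using eventually_at_top_principal_ge[of T t] by eventually_elim (use assms(2) x_antimono in blast)
qed

lemma z_tendsto:
  assumes "(x \<longlongrightarrow> \<alpha>) (inf at_top (principal T))" "t \<in> T"
  shows "(z \<longlongrightarrow> x t + y t + z t - \<alpha>) (inf at_top (principal T))"
proof -
  have "((\<lambda>u. x t + y t + z t - x u - y u) \<longlongrightarrow> x t + y t + z t - \<alpha> - 0) (inf at_top (principal T))"
    by (intro tendsto_diff tendsto_const assms(1) y_tendsto_zero)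
  moreover have "eventually (\<lambda>u. x t + y t + z t - x u - y u = z u) (inf at_top (principal T))"
    unfolding eventually_inf_principal using total_eq[OF assms(2)] by simp
  ultimately show ?thesis
    using tendsto_cong by force
qed

lemma x_minus_y_deriv_nonneg:
  assumes "t \<in> T" "0 \<le> \<mu>" "(1 + \<mu>) * b * x t \<le> \<mu> * c * (x t + y t)"
  shows "0 \<le> x' t - \<mu> * y' t"
proof -
  have "0 < x t + y t"
    using x_pos[OF assms(1)] y_pos[OF assms(1)] by simp
  then have eq: "x' t - \<mu> * y' t =
      y (fwd_jump T t) / (x t + y t) * (\<mu> * c * (x t + y t) - (1 + \<mu>) * b * x t)"
    using assms(1) by (simp add: x'_eq y'_eq divide_simps) (simp add: algebra_simps)
  have "0 \<le> y (fwd_jump T t) / (x t + y t)"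
    using \<open>0 < x t + y t\<close> y_fwd_jump_pos[OF assms(1)] by simp
  then show ?thesis
    unfolding eq using assms(3) by (intro mult_nonneg_nonneg) simp_all
qed

lemma x_le_of_x_tendsto_zero:
  assumes x: "(x \<longlongrightarrow> 0) (inf at_top (principal T))"
    and "0 \<le> \<mu>" and bound: "\<And>t. t \<in> T \<Longrightarrow> (1 + \<mu>) * b * x t \<le> \<mu> * c * (x t + y t)"
    and "t \<in> T"
  shows "x t \<le> \<mu> * y t"
proof -
  let ?w = "\<lambda>u. x u - \<mu> * y u"
  have w_deriv: "has_delta_derivative T ?w (x' \<tau> - \<mu> * y' \<tau>) \<tau>" if "\<tau> \<in> T" for \<tau>
    using has_delta_derivative_add[OF x_deriv[OF that]
        has_delta_derivative_cmult[OF y_deriv[OF that], of "- \<mu>"]]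
    by simp
  have w_deriv_nonneg: "0 \<le> x' \<tau> - \<mu> * y' \<tau>" if "\<tau> \<in> T" for \<tau>
    using x_minus_y_deriv_nonneg[OF that \<open>0 \<le> \<mu>\<close> bound[OF that]] .
  have "?w t \<le> ?w u" if "u \<in> T" "t \<le> u" for u
    by (rule has_delta_derivative_nonneg_imp_le[OF closed \<open>t \<in> T\<close> that,
          where D = "\<lambda>\<tau>. x' \<tau> - \<mu> * y' \<tau>"])
      (blast intro: w_deriv w_deriv_nonneg)+
  then have "eventually (\<lambda>u. ?w t \<le> ?w u) (inf at_top (principal T))"
    using eventually_at_top_principal_ge[of T t] by (auto elim: eventually_mono)
  moreover have "(?w \<longlongrightarrow> 0) (inf at_top (principal T))"
    using tendsto_diff[OF x tendsto_mult_left[OF y_tendsto_zero, of \<mu>]] by simp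
  ultimately have "?w t \<le> 0"
    using at_top_principal_neq_bot[OF unbounded] by (intro tendsto_lowerbound)
  then show ?thesis
    by simp
qed

lemma x_le_mult_total_improve:
  assumes x: "(x \<longlongrightarrow> 0) (inf at_top (principal T))"
    and "0 \<le> q" "q \<le> 1" and le: "\<And>t. t \<in> T \<Longrightarrow> x t \<le> q * (x t + y t)"
    and "t \<in> T"
  shows "x t \<le> b / c * q * (x t + y t)"
proof -
  have "b * q < c"
    using mult_left_le[OF \<open>q \<le> 1\<close> b_nonneg] b_less_c by linarith
  define \<mu> where "\<mu> = b * q / (c - b * q)"
  have "0 \<le> \<mu>" and \<mu>: "\<mu> * (c - b * q) = b * q"
    using \<open>b * q < c\<close> \<open>0 \<le> q\<close> b_nonneg by (simp_all add: \<mu>_def)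
  have "x t \<le> \<mu> * y t"
  proof (rule x_le_of_x_tendsto_zero[OF x \<open>0 \<le> \<mu>\<close> _ \<open>t \<in> T\<close>])
    fix u
    assume "u \<in> T"
    then have "(1 + \<mu>) * b * x u \<le> (1 + \<mu>) * b * (q * (x u + y u))"
      using le \<open>0 \<le> \<mu>\<close> b_nonneg by (intro mult_left_mono) auto
    also have "\<dots> = \<mu> * c * (x u + y u)"
      using \<mu> by (simp add: algebra_simps)
    finally show "(1 + \<mu>) * b * x u \<le> \<mu> * c * (x u + y u)" .
  qed
  then have "x t * (c - b * q) \<le> \<mu> * y t * (c - b * q)"
    using \<open>b * q < c\<close> by (intro mult_right_mono) simp_all
  also have "\<dots> = b * q * y t"
    using \<mu> by simp
  finally have "c * x t \<le> b * q * (x t + y t)"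
    by (simp add: algebra_simps)
  then show ?thesis
    using c_pos by (simp add: pos_le_divide_eq mult.commute mult.left_commute)
qed

lemma x_le_power_mult_total:
  assumes "(x \<longlongrightarrow> 0) (inf at_top (principal T))"
  shows "t \<in> T \<Longrightarrow> x t \<le> (b / c) ^ n * (x t + y t)"
proof (induction n arbitrary: t)
  case 0
  then show ?case
    using y_pos by (simp add: less_imp_le)
next
  case (Suc n)
  have "0 \<le> (b / c) ^ n" "(b / c) ^ n \<le> 1"
    using b_nonneg b_less_c c_pos by (simp_all add: power_le_one)
  with Suc show ?case
    using x_le_mult_total_improve[OF assms, of "(b / c) ^ n"] by (simp add: mult.assoc)
qed

lemma x_limit_pos:
  assumes x: "(x \<longlongrightarrow> \<alpha>) (inf at_top (principal T))"
  shows "0 < \<alpha>"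
proof (rule ccontr)
  have "0 \<le> \<alpha>"
    using x unbounded by (rule tendsto_at_top_principal_lowerbound) (simp add: x_pos less_imp_le)
  moreover assume "\<not> 0 < \<alpha>"
  ultimately have x0: "(x \<longlongrightarrow> 0) (inf at_top (principal T))"
    using x by simp
  obtain t where "t \<in> T"
    using T_nonempty by blast
  have "(\<lambda>n. (b / c) ^ n * (x t + y t)) \<longlonglongrightarrow> 0 * (x t + y t)"
    using b_nonneg b_less_c c_pos by (intro tendsto_intros) auto
  then have "x t \<le> 0"
    using x_le_power_mult_total[OF x0 \<open>t \<in> T\<close>] by (intro LIMSEQ_le_const) auto
  then show False
    using x_pos[OF \<open>t \<in> T\<close>] by simp
qed

end

theorem corollary27:
  fixes T :: "real set" and t0 b c x0 y0 z0 :: real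
    and x y z x' y' z' :: "real \<Rightarrow> real"
  assumes "time_scale T"
    and "\<forall>r. \<exists>t\<in>T. t > r"
    and "t0 \<in> T"
    and "0 \<le> b" and "b < c"
    and "x0 > 0" and "y0 > 0" and "z0 \<ge> 0"
    and "\<forall>t\<in>T. x t > 0 \<and> y t > 0 \<and> z t \<ge> 0"
    and "x t0 = x0" and "y t0 = y0" and "z t0 = z0"
    and "\<forall>t\<in>T. has_delta_derivative T x (x' t) t
                \<and> has_delta_derivative T y (y' t) t
                \<and> has_delta_derivative T z (z' t) t"
    and "\<forall>t\<in>T. x' t = - (b * x t * y (fwd_jump T t) / (x t + y t))"
    and "\<forall>t\<in>T. y' t = b * x t * y (fwd_jump T t) / (x t + y t) - c * y (fwd_jump T t)"
    and "\<forall>t\<in>T. z' t = c * y (fwd_jump T t)"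
  shows "\<exists>\<alpha>. 0 < \<alpha> \<and> \<alpha> < x0 + y0 + z0
           \<and> (x \<longlongrightarrow> \<alpha>) (inf at_top (principal T))
           \<and> (y \<longlongrightarrow> 0) (inf at_top (principal T))
           \<and> (z \<longlongrightarrow> x0 + y0 + z0 - \<alpha>) (inf at_top (principal T))"
proof -
  interpret sir_time_scale T b c x y z x' y' z'
    using assms by unfold_locales (auto simp: time_scale_def)
  obtain \<alpha> where x_lim: "(x \<longlongrightarrow> \<alpha>) (inf at_top (principal T))"
    using x_converges .
  have "0 < \<alpha>"
    using x_lim by (rule x_limit_pos)
  moreover have "\<alpha> < x0 + y0 + z0"
    using x_limit_le[OF x_lim \<open>t0 \<in> T\<close>] assms(7,8,10) by linarith
  moreover have "(z \<longlongrightarrow> x0 + y0 + z0 - \<alpha>) (inf at_top (principal T))"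
    using z_tendsto[OF x_lim \<open>t0 \<in> T\<close>] assms(10-12) by simp
  ultimately show ?thesis
    using x_lim y_tendsto_zero by blast
qed

end
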